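(* Let $p,q$ be coprime integers with $p$ odd, $q$ even and $0<q<p$. Then the crossing number of the semi-even expansion of $p/q$ is less than or equal to the crossing number of the even expansion of $p/q$.
   Context: For a continued fraction $[a_1,\ldots,a_n]=a_1+\cfrac{1}{a_2+\cfrac{1}{\cdots+\cfrac{1}{a_n}}}$ with integer entries, its crossing number is $\sum_{i=1}^n|a_i|$. Both expansions are produced by the following procedure, which depends on a rule specifying at which steps $k$ the entry is required to be even. Start with $x_1=p/q$ and $\varepsilon_1=+1$. At step $k$, write $x_k=P_k/Q_k>0$ in lowest terms and divide with positive remainder: $P_k=cQ_k+r$ with integers $c$ and $0\le r<Q_k$. If step $k$ is required to be even and $c$ is odd, set $c_k=c+1$ and $r_k=r-Q_k$; otherwise set $c_k=c$ and $r_k=r$. Put $a_k=\varepsilon_k c_k$. If $r_k=0$, stop and output $[a_1,\ldots,a_k]$; otherwise set $x_{k+1}=Q_k/|r_k|$ and $\varepsilon_{k+1}=\varepsilon_k\cdot\mathrm{sign}(r_k)$ and continue. (One has $\varepsilon_k x_k=a_k+1/(\varepsilon_{k+1}x_{k+1})$, so the output is a continued fraction equal to $p/q$, and the procedure terminates.) The even expansion of $p/q$ is the output when every step $k$ is required to be even (all entries are then even). The semi-even expansion of $p/q$ is the output when exactly the steps with even index $k$ are required to be even (entries in odd positions are obtained by ordinary division with nonnegative remainder). For example, for $13/8$ the even expansion is $[2,-2,-2,2]$ (crossing number $8$) and the semi-even expansion is $[1,2,-2,-2]$ (crossing number $7$). *)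

theory Defs
  imports Main
begin

text \<open>Arguments: the rule req (req k means
step k is required to be even), the current numerator P and denominator Q of
x_k (reduced to lowest terms at the start of the step), the sign eps_k and the
step index k. The result is None if the procedure does not terminate.\<close>

partial_function (option) cf_proc ::
  "(nat \<Rightarrow> bool) \<Rightarrow> int \<Rightarrow> int \<Rightarrow> int \<Rightarrow> nat \<Rightarrow> int list option" where
  "cf_proc req P Q e k =
    (let g = gcd P Q; P' = P div g; Q' = Q div g;
         c = P' div Q'; r = P' mod Q';
         ck = (if req k \<and> odd c then c + 1 else c);
         rk = (if req k \<and> odd c then r - Q' else r);
         a = e * ck
     in if rk = 0 then Some [a]
        else Option.bind (cf_proc req Q' \<bar>rk\<bar> (e * sgn rk) (Suc k)) (\<lambda>l. Some (a # l)))"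

definition even_expansion :: "int \<Rightarrow> int \<Rightarrow> int list option" where
  "even_expansion p q = cf_proc (\<lambda>k. True) p q 1 1"

definition semi_even_expansion :: "int \<Rightarrow> int \<Rightarrow> int list option" where
  "semi_even_expansion p q = cf_proc (\<lambda>k. even k) p q 1 1"

definition crossing_number :: "int list \<Rightarrow> int" where
  "crossing_number as = sum_list (map abs as)"

end

theory Submission
  imports Defs
begin

text \<open>Both expansions perform the same divisions P = cQ + r, and a crossing number is the sum
of the quotients after rounding odd ones up at the required steps. Where the even expansion
rounds up and the semi-even one does not, the two continue from different fractions (Q/(Q - r)
instead of Q/r), so a step-by-step comparison must be strengthened. For x = P/Q with P + Q odd,
the semi-even cost of x (starting at a free or at a required step, according to the parity of
P) is bounded by the even cost of x, and also, up to an additive constant, by the even cost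
of x/(x - 1), 1 + x/(x - 1) and x + 1. These five inequalities are proved simultaneously by
strong induction on Q: unfolding one or two division steps turns each of them into others at
smaller denominators.\<close>

text \<open>The crossing number of an expansion is the sum of the quotients c_k used by the procedure,
so it can be computed without building the expansion. In expansion_cost alt b P Q the flag b
says whether the current step is required to be even and alt whether the requirement toggles
from step to step: the even expansion is alt = False, b = True, and the semi-even expansion
alternates between b = False (odd steps) and b = True (even steps). No gcd is taken, since
all fractions reached from a reduced one are reduced.\<close>

function expansion_cost :: "bool \<Rightarrow> bool \<Rightarrow> int \<Rightarrow> int \<Rightarrow> int" where
  "expansion_cost alt b P Q =
    (if Q \<le> 0 \<or> P mod Q = 0 then P div Q
     else if b \<and> odd (P div Q) then P div Q + 1 + expansion_cost alt (alt \<noteq> b) Q (Q - P mod Q)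
     else P div Q + expansion_cost alt (alt \<noteq> b) Q (P mod Q))"
  by pat_completeness auto
termination
  by (relation "measure (\<lambda>(_, _, _, Q). nat Q)") (auto simp: not_le order_le_neq_trans)

declare expansion_cost.simps [simp del]

abbreviation even_cost :: "int \<Rightarrow> int \<Rightarrow> int" where
  "even_cost \<equiv> expansion_cost False True"

abbreviation semi_cost_free :: "int \<Rightarrow> int \<Rightarrow> int" where
  "semi_cost_free \<equiv> expansion_cost True False"

abbreviation semi_cost_forced :: "int \<Rightarrow> int \<Rightarrow> int" where
  "semi_cost_forced \<equiv> expansion_cost True True"

lemma obtain_quotient_remainder:
  fixes P Q :: int
  assumes "0 < Q"
  obtains m f where "P = m * Q + f" "0 \<le> f" "f < Q"
  using assms by (metis div_mult_mod_eq pos_mod_bound pos_mod_sign)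

lemma expansion_cost_unfold:
  fixes m f Q :: int
  assumes "0 < f" "f < Q"
  shows "expansion_cost alt b (m * Q + f) Q =
    (if b \<and> odd m then m + 1 + expansion_cost alt (alt \<noteq> b) Q (Q - f)
     else m + expansion_cost alt (alt \<noteq> b) Q f)"
proof -
  have "(m * Q + f) div Q = m" "(m * Q + f) mod Q = f"
    using assms by simp_all
  then show ?thesis
    using assms by (subst expansion_cost.simps) simp
qed

lemma expansion_cost_multiple:
  fixes m Q :: int
  assumes "0 < Q"
  shows "expansion_cost alt b (m * Q) Q = m"
  using assms by (subst expansion_cost.simps) simp

text \<open>Each step of the even expansion of ((k+1)Q + R)/(kQ + R) has quotient 1, rounded up to 2.\<close>

lemma even_cost_iterate:
  fixes k Q R :: int
  assumes "0 \<le> k" "0 < Q" "0 < R"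
  shows "even_cost ((k + 1) * Q + R) (k * Q + R) = 2 * k + even_cost (Q + R) R"
  using assms(1)
proof (induction k rule: int_ge_induct)
  case base
  show ?case by simp
next
  case (step k)
  have "Q < (k + 1) * Q + R"
    using step.hyps assms(2,3) by (simp add: distrib_right add_strict_increasing2)
  then have "even_cost (1 * ((k + 1) * Q + R) + Q) ((k + 1) * Q + R)
      = 2 + even_cost ((k + 1) * Q + R) (k * Q + R)"
    using expansion_cost_unfold[of Q "(k + 1) * Q + R" False True 1] assms(2)
    by (simp add: algebra_simps)
  then show ?case
    using step.IH by (simp add: algebra_simps)
qed

definition cost_bounds :: "int \<Rightarrow> bool" where
  "cost_bounds Q \<longleftrightarrow> (\<forall>P.
    (odd P \<and> even Q \<longrightarrow> semi_cost_free P Q \<le> even_cost P Q) \<and>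
    (even P \<and> odd Q \<longrightarrow> semi_cost_forced P Q \<le> even_cost P Q) \<and>
    (even P \<and> odd Q \<and> Q < P \<longrightarrow> semi_cost_forced P Q \<le> 1 + even_cost P (P - Q)) \<and>
    (odd P \<and> even Q \<and> Q < P \<longrightarrow> semi_cost_free P Q + 1 \<le> even_cost (2 * P - Q) (P - Q)) \<and>
    (odd P \<and> even Q \<longrightarrow> semi_cost_free P Q \<le> 1 + even_cost (P + Q) Q))"

lemma cost_boundsD:
  assumes "cost_bounds Q"
  shows cost_bounds_free_le_even:
      "odd P \<Longrightarrow> even Q \<Longrightarrow> semi_cost_free P Q \<le> even_cost P Q"
    and cost_bounds_forced_le_even:
      "even P \<Longrightarrow> odd Q \<Longrightarrow> semi_cost_forced P Q \<le> even_cost P Q"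
    and cost_bounds_forced_le_even_complement:
      "even P \<Longrightarrow> odd Q \<Longrightarrow> Q < P \<Longrightarrow> semi_cost_forced P Q \<le> 1 + even_cost P (P - Q)"
    and cost_bounds_free_less_even_shift:
      "odd P \<Longrightarrow> even Q \<Longrightarrow> Q < P \<Longrightarrow> semi_cost_free P Q + 1 \<le> even_cost (2 * P - Q) (P - Q)"
    and cost_bounds_free_le_even_succ:
      "odd P \<Longrightarrow> even Q \<Longrightarrow> semi_cost_free P Q \<le> 1 + even_cost (P + Q) Q"
  using assms unfolding cost_bounds_def by blast+

context
  fixes Q :: int
  assumes smaller: "\<And>Q'. 0 < Q' \<Longrightarrow> Q' < Q \<Longrightarrow> cost_bounds Q'"
    and Q_pos: "0 < Q"
begin

lemma free_le_even_step:
  assumes "odd P" "even Q"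
  shows "semi_cost_free P Q \<le> even_cost P Q"
proof -
  obtain m f where P: "P = m * Q + f" "0 \<le> f" "f < Q"
    using obtain_quotient_remainder[OF Q_pos] .
  have "odd f" using P(1) assms by auto
  then have f: "0 < f" "f < Q" using P(2,3) by (auto intro: order_le_neq_trans)
  then have bounds: "cost_bounds f" using smaller by simp
  have free: "semi_cost_free P Q = m + semi_cost_forced Q f"
    using expansion_cost_unfold[OF f] P(1) by simp
  show ?thesis
  proof (cases "odd m")
    case True
    then have "even_cost P Q = m + 1 + even_cost Q (Q - f)"
      using expansion_cost_unfold[OF f] P(1) by simp
    then show ?thesis
      using free cost_bounds_forced_le_even_complement[OF bounds assms(2) \<open>odd f\<close> f(2)]
      by simp
  next
    case False
    then have "even_cost P Q = m + even_cost Q f"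
      using expansion_cost_unfold[OF f] P(1) by simp
    then show ?thesis
      using free cost_bounds_forced_le_even[OF bounds assms(2) \<open>odd f\<close>] by simp
  qed
qed

lemma forced_le_even_step:
  assumes "even P" "odd Q"
  shows "semi_cost_forced P Q \<le> even_cost P Q"
proof -
  obtain m f where P: "P = m * Q + f" "0 \<le> f" "f < Q"
    using obtain_quotient_remainder[OF Q_pos] .
  show ?thesis
  proof (cases "f = 0")
    case True
    then show ?thesis using P(1) expansion_cost_multiple[OF Q_pos] by simp
  next
    case False
    then have f: "0 < f" "f < Q" using P(2,3) by simp_all
    show ?thesis
    proof (cases "odd m")
      case True
      then have "odd f" using P(1) assms by auto
      have "cost_bounds (Q - f)" using smaller f by simp
      moreover have "semi_cost_forced P Q = m + 1 + semi_cost_free Q (Q - f)"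
        and "even_cost P Q = m + 1 + even_cost Q (Q - f)"
        using expansion_cost_unfold[OF f] P(1) True by simp_all
      ultimately show ?thesis
        using cost_bounds_free_le_even[of "Q - f" Q] assms(2) \<open>odd f\<close> by simp
    next
      case False
      then have "even f" using P(1) assms by auto
      have "cost_bounds f" using smaller f by simp
      moreover have "semi_cost_forced P Q = m + semi_cost_free Q f"
        and "even_cost P Q = m + even_cost Q f"
        using expansion_cost_unfold[OF f] P(1) False by simp_all
      ultimately show ?thesis
        using cost_bounds_free_le_even[of f Q] assms(2) \<open>even f\<close> by simp
    qed
  qed
qed

lemma free_le_even_succ_step:
  assumes "odd P" "even Q"
  shows "semi_cost_free P Q \<le> 1 + even_cost (P + Q) Q"
proof -
  obtain m f where P: "P = m * Q + f" "0 \<le> f" "f < Q"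
    using obtain_quotient_remainder[OF Q_pos] .
  have "odd f" using P(1) assms by auto
  then have f: "0 < f" "f < Q" using P(2,3) by (auto intro: order_le_neq_trans)
  then have bounds: "cost_bounds f" using smaller by simp
  have free: "semi_cost_free P Q = m + semi_cost_forced Q f"
    using expansion_cost_unfold[OF f] P(1) by simp
  have PQ: "P + Q = (m + 1) * Q + f" using P(1) by (simp add: algebra_simps)
  show ?thesis
  proof (cases "odd m")
    case True
    then have "even_cost (P + Q) Q = m + 1 + even_cost Q f"
      using expansion_cost_unfold[OF f] PQ by simp
    then show ?thesis
      using free cost_bounds_forced_le_even[OF bounds assms(2) \<open>odd f\<close>] by simp
  next
    case False
    then have "even_cost (P + Q) Q = m + 2 + even_cost Q (Q - f)"
      using expansion_cost_unfold[OF f] PQ by simp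
    then show ?thesis
      using free cost_bounds_forced_le_even_complement[OF bounds assms(2) \<open>odd f\<close> f(2)]
      by simp
  qed
qed

lemma forced_add_two_le_even_step:
  assumes "even N" "odd f" "0 < f" "f < Q"
  shows "semi_cost_forced N f + 2 \<le> even_cost (N + 2 * f) f"
proof -
  obtain j g where N: "N = j * f + g" "0 \<le> g" "g < f"
    using obtain_quotient_remainder[OF \<open>0 < f\<close>] .
  have N2: "N + 2 * f = (j + 2) * f + g" using N(1) by (simp add: algebra_simps)
  show ?thesis
  proof (cases "g = 0")
    case True
    then show ?thesis
      using N(1) N2 expansion_cost_multiple[OF \<open>0 < f\<close>] by simp
  next
    case False
    then have g: "0 < g" "g < f" using N(2,3) by simp_all
    show ?thesis
    proof (cases "odd j")
      case True
      then have "odd g" using N(1) assms(1,2) by auto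
      have "cost_bounds (f - g)" using smaller g assms(4) by simp
      moreover have "semi_cost_forced N f = j + 1 + semi_cost_free f (f - g)"
        using expansion_cost_unfold[OF g] N(1) True by simp
      moreover have "even_cost (N + 2 * f) f = j + 3 + even_cost f (f - g)"
        using expansion_cost_unfold[OF g] N2 True by simp
      ultimately show ?thesis
        using cost_bounds_free_le_even[of "f - g" f] assms(2) \<open>odd g\<close> by simp
    next
      case False
      then have "even g" using N(1) assms(1,2) by auto
      have "cost_bounds g" using smaller g assms(4) by simp
      moreover have "semi_cost_forced N f = j + semi_cost_free f g"
        using expansion_cost_unfold[OF g] N(1) False by simp
      moreover have "even_cost (N + 2 * f) f = j + 2 + even_cost f g"
        using expansion_cost_unfold[OF g] N2 False by simp
      ultimately show ?thesis
        using cost_bounds_free_le_even[of g f] assms(2) \<open>even g\<close> by simp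
    qed
  qed
qed

lemma free_less_even_shift_step:
  assumes "odd P" "even Q" "Q < P"
  shows "semi_cost_free P Q + 1 \<le> even_cost (2 * P - Q) (P - Q)"
proof -
  obtain m f where P: "P = m * Q + f" "0 \<le> f" "f < Q"
    using obtain_quotient_remainder[OF Q_pos] .
  have "odd f" using P(1) assms by auto
  then have f: "0 < f" "f < Q" using P(2,3) by (auto intro: order_le_neq_trans)
  have free: "semi_cost_free P Q = m + semi_cost_forced Q f"
    using expansion_cost_unfold[OF f] P(1) by simp
  have "0 < m * Q" using P(1,3) assms(3) by linarith
  then have "1 \<le> m" using Q_pos by (simp add: zero_less_mult_iff)
  then consider "m = 1" | "2 \<le> m" by linarith
  then show ?thesis
  proof cases
    case 1
    then have "2 * P - Q = Q + 2 * f" "P - Q = f" using P(1) by simp_all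
    then show ?thesis
      using free 1 forced_add_two_le_even_step[of Q f] assms(2) \<open>odd f\<close> f by (simp only:) simp
  next
    case 2
    then have "2 * Q \<le> m * Q" using Q_pos by simp
    then have "Q < P - Q" using P(1) f(1) by linarith
    have "2 * P - Q = 2 * (P - Q) + Q" by simp
    then have shift: "even_cost (2 * P - Q) (P - Q) = 2 + even_cost (P - Q) Q"
      using expansion_cost_unfold[of Q "P - Q" False True 2] Q_pos \<open>Q < P - Q\<close>
      by (simp only:) simp
    have PQ: "P - Q = (m - 1) * Q + f" using P(1) by (simp add: algebra_simps)
    have "cost_bounds f" using smaller f by simp
    show ?thesis
    proof (cases "odd m")
      case True
      then have "even_cost (P - Q) Q = m - 1 + even_cost Q f"
        using expansion_cost_unfold[OF f] PQ by simp
      then show ?thesis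
        using shift free cost_bounds_forced_le_even[OF \<open>cost_bounds f\<close>] assms(2) \<open>odd f\<close>
        by simp
    next
      case False
      then have "even_cost (P - Q) Q = m + even_cost Q (Q - f)"
        using expansion_cost_unfold[OF f] PQ by simp
      then show ?thesis
        using shift free cost_bounds_forced_le_even_complement[OF \<open>cost_bounds f\<close>]
          assms(2) \<open>odd f\<close> f(2)
        by simp
    qed
  qed
qed

lemma forced_le_even_complement_step:
  assumes "even P" "odd Q" "Q < P"
  shows "semi_cost_forced P Q \<le> 1 + even_cost P (P - Q)"
proof -
  obtain m f where P: "P = m * Q + f" "0 \<le> f" "f < Q"
    using obtain_quotient_remainder[OF Q_pos] .
  have "0 < m * Q" using P(1,3) assms(3) by linarith
  then have "1 \<le> m" using Q_pos by (simp add: zero_less_mult_iff)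
  show ?thesis
  proof (cases "f = 0")
    case True
    then have "even m" using P(1) assms(1,2) by auto
    then have "2 \<le> m" using \<open>1 \<le> m\<close> by (cases "m = 1") auto
    have "semi_cost_forced P Q = m"
      using P(1) True expansion_cost_multiple[OF Q_pos] by simp
    moreover have "even_cost P (P - Q) = 2 * (m - 2) + even_cost (2 * Q) Q"
      using even_cost_iterate[of "m - 2" Q Q] \<open>2 \<le> m\<close> Q_pos P(1) True
      by (simp add: algebra_simps)
    moreover have "even_cost (2 * Q) Q = 2"
      using expansion_cost_multiple[OF Q_pos] by simp
    ultimately show ?thesis using \<open>1 \<le> m\<close> by simp
  next
    case False
    then have f: "0 < f" "f < Q" using P(2,3) by simp_all
    have iterate: "even_cost P (P - Q) = 2 * (m - 1) + even_cost (Q + f) f"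
      using even_cost_iterate[of "m - 1" Q f] \<open>1 \<le> m\<close> Q_pos f(1) P(1)
      by (simp add: algebra_simps)
    show ?thesis
    proof (cases "odd m")
      case True
      then have "odd f" using P(1) assms(1,2) by auto
      have "cost_bounds (Q - f)" using smaller f by simp
      moreover have "semi_cost_forced P Q = m + 1 + semi_cost_free Q (Q - f)"
        using expansion_cost_unfold[OF f] P(1) True by simp
      moreover have "2 * Q - (Q - f) = Q + f" "Q - (Q - f) = f" by simp_all
      ultimately show ?thesis
        using iterate cost_bounds_free_less_even_shift[of "Q - f" Q] assms(2) \<open>odd f\<close> f
          \<open>1 \<le> m\<close>
        by simp
    next
      case False
      then have "even f" using P(1) assms(1,2) by auto
      then have "2 \<le> m" using \<open>1 \<le> m\<close> False by (cases "m = 1") auto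
      have "cost_bounds f" using smaller f by simp
      moreover have "semi_cost_forced P Q = m + semi_cost_free Q f"
        using expansion_cost_unfold[OF f] P(1) False by simp
      ultimately show ?thesis
        using iterate cost_bounds_free_le_even_succ[of f Q] assms(2) \<open>even f\<close> \<open>2 \<le> m\<close>
        by simp
    qed
  qed
qed

end

lemma cost_bounds:
  fixes Q :: int
  assumes "0 < Q"
  shows "cost_bounds Q"
  using assms
proof (induction "nat Q" arbitrary: Q rule: less_induct)
  case less
  have smaller: "cost_bounds Q'" if "0 < Q'" "Q' < Q" for Q'
    using less.hyps[of Q'] that by simp
  show ?case
    unfolding cost_bounds_def
    by (simp add: free_le_even_step[OF smaller less.prems]
        forced_le_even_step[OF smaller less.prems]
        forced_le_even_complement_step[OF smaller less.prems]
        free_less_even_shift_step[OF smaller less.prems]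
        free_le_even_succ_step[OF smaller less.prems])
qed

text \<open>b plays the role of req k. Under this invariant a required step never meets an odd integer
P/Q, on which the procedure would loop (1 = 2 - 1/1 = ...).\<close>

definition expansion_invariant :: "bool \<Rightarrow> bool \<Rightarrow> int \<Rightarrow> int \<Rightarrow> bool" where
  "expansion_invariant alt b P Q \<longleftrightarrow>
    0 < P \<and> 0 < Q \<and> coprime P Q \<and> odd (P + Q) \<and> (if alt then b = even P else b)"

lemma expansion_invariant_exact:
  assumes "expansion_invariant alt b (c * Q) Q"
  shows "Q = 1" "even c"
proof -
  have "coprime (c * Q) Q" "0 < Q" "odd (c * Q + Q)"
    using assms by (simp_all add: expansion_invariant_def)
  then show "Q = 1" by simp
  with \<open>odd (c * Q + Q)\<close> show "even c" by simp
qed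

lemma expansion_invariant_step:
  assumes "expansion_invariant alt b (c * Q + r) Q" "0 < r" "r < Q"
  shows "expansion_invariant alt (alt \<noteq> b) Q (if b \<and> odd c then Q - r else r)"
proof -
  have cop: "coprime (c * Q + r) Q" and par: "odd (c * Q + r + Q)"
    and req: "if alt then b = even (c * Q + r) else b"
    using assms(1) by (simp_all add: expansion_invariant_def)
  have "coprime Q r"
    using cop by (metis coprime_iff_gcd_eq_1 gcd.commute gcd_add_mult)
  moreover from this have "coprime Q (Q - r)"
    by (metis coprime_iff_gcd_eq_1 gcd.commute gcd_diff2)
  moreover have "\<not> b \<Longrightarrow> even Q" using req par by (cases alt) auto
  ultimately show ?thesis
    using assms(2,3) par req unfolding expansion_invariant_def by (cases alt) auto
qed

lemma cf_proc_reduced_step: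
  fixes c r Q :: int
  assumes "coprime (c * Q + r) Q" "0 \<le> r" "r < Q"
  shows "cf_proc req (c * Q + r) Q e k =
    (if req k \<and> odd c then map_option (Cons (e * (c + 1))) (cf_proc req Q (Q - r) (- e) (Suc k))
     else if r = 0 then Some [e * c]
     else map_option (Cons (e * c)) (cf_proc req Q r e (Suc k)))"
proof -
  have "gcd (c * Q + r) Q = 1" "(c * Q + r) div Q = c" "(c * Q + r) mod Q = r"
    using assms by simp_all
  moreover have "r - Q \<noteq> 0" "\<bar>r - Q\<bar> = Q - r" "sgn (r - Q) = - 1" "\<bar>r\<bar> = r"
    using assms(2,3) by auto
  ultimately show ?thesis
    by (subst cf_proc.simps) (simp add: Let_def map_conv_bind_option comp_def)
qed

lemma cf_proc_crossing_number:
  assumes toggle: "\<And>j. req (Suc j) = (alt \<noteq> req j)"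
    and "expansion_invariant alt (req k) P Q" "\<bar>e\<bar> = 1"
  shows "\<exists>l. cf_proc req P Q e k = Some l \<and> crossing_number l = expansion_cost alt (req k) P Q"
  using assms(2,3)
proof (induction "nat Q" arbitrary: P Q e k rule: less_induct)
  case less
  have "0 < P" "0 < Q" "coprime P Q"
    using less.prems(1) by (simp_all add: expansion_invariant_def)
  obtain c r where P: "P = c * Q + r" "0 \<le> r" "r < Q"
    using obtain_quotient_remainder[OF \<open>0 < Q\<close>] .
  have "- 1 * Q < c * Q" using P \<open>0 < P\<close> by simp
  then have "- 1 < c" using mult_less_cancel_right_pos[OF \<open>0 < Q\<close>] by blast
  then have "0 \<le> c" by simp
  have abs_e: "\<bar>e * x\<bar> = x" if "0 \<le> x" for x
    using less.prems(2) that by (simp add: abs_mult)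
  show ?case
  proof (cases "r = 0")
    case True
    then have "Q = 1" "even c"
      using expansion_invariant_exact less.prems(1) P(1) by simp_all
    then have "cf_proc req P Q e k = Some [e * c]"
      using cf_proc_reduced_step[of c Q r] \<open>coprime P Q\<close> P True by simp
    moreover have "expansion_cost alt (req k) P Q = c"
      using expansion_cost_multiple[OF \<open>0 < Q\<close>] P(1) True by simp
    ultimately show ?thesis
      using abs_e \<open>0 \<le> c\<close> by (simp add: crossing_number_def)
  next
    case False
    then have r: "0 < r" "r < Q" using P(2,3) by simp_all
    define adjust where "adjust \<longleftrightarrow> req k \<and> odd c"
    define c' where "c' = (if adjust then c + 1 else c)"
    define r' where "r' = (if adjust then Q - r else r)"
    define e' where "e' = (if adjust then - e else e)"
    have "expansion_invariant alt (req (Suc k)) Q r'"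
      using expansion_invariant_step[of alt "req k" c Q r] less.prems(1) P(1) r toggle
      unfolding adjust_def r'_def by simp
    moreover have "nat r' < nat Q" "\<bar>e'\<bar> = 1"
      using r less.prems(2) unfolding r'_def e'_def by auto
    ultimately obtain l where l: "cf_proc req Q r' e' (Suc k) = Some l"
      "crossing_number l = expansion_cost alt (req (Suc k)) Q r'"
      using less.hyps by blast
    have "cf_proc req P Q e k = Some (e * c' # l)"
      using cf_proc_reduced_step[of c Q r] \<open>coprime P Q\<close> P r l(1)
      unfolding adjust_def c'_def r'_def e'_def by (auto split: if_splits)
    moreover have "expansion_cost alt (req k) P Q = c' + expansion_cost alt (req (Suc k)) Q r'"
      using expansion_cost_unfold[OF r] P(1) toggle
      unfolding adjust_def c'_def r'_def by simp
    ultimately show ?thesis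
      using l(2) abs_e \<open>0 \<le> c\<close> unfolding c'_def by (simp add: crossing_number_def)
  qed
qed

theorem proposition5:
  fixes p q :: int
  assumes "coprime p q" and "odd p" and "even q" and "0 < q" and "q < p"
  shows "\<exists>e s. even_expansion p q = Some e \<and> semi_even_expansion p q = Some s \<and>
           crossing_number s \<le> crossing_number e"
proof -
  have "0 < p" using assms(4,5) by simp
  then have "expansion_invariant False True p q" "expansion_invariant True False p q"
    using assms(1-4) by (simp_all add: expansion_invariant_def)
  then obtain e s where
    "cf_proc (\<lambda>_. True) p q 1 1 = Some e" "crossing_number e = even_cost p q"
    "cf_proc even p q 1 1 = Some s" "crossing_number s = semi_cost_free p q"
    using cf_proc_crossing_number[of "\<lambda>_. True" False 1 p q 1]
      cf_proc_crossing_number[of even True 1 p q 1]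
    by auto
  moreover have "semi_cost_free p q \<le> even_cost p q"
    using cost_bounds_free_le_even[OF cost_bounds] assms(2-4) by simp
  ultimately show ?thesis
    unfolding even_expansion_def semi_even_expansion_def by auto
qed

end
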